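(* Let $N$ be a positive integer, $R\in\{0,\dots,N\}$, $n\in\{1,\dots,N\}$, and $r\in\{0,\dots,n\}$ with $R+n-N\le r\le R$. Let $\mathscr{A}=\{\vartheta\in\mathbb{Z}^+:r\le\vartheta\le R\}$, $\mathscr{B}=\{\vartheta\in\mathbb{Z}^+:R\le\vartheta\le r+N-n\}$, and $\widehat R=\min\{N,\lfloor(N+1)\frac rn\rfloor\}$. Then $\widehat R\in\mathscr{A}$ provided $\frac rn\le\frac RN$, and $\widehat R\in\mathscr{B}$ provided $\frac rn\ge\frac RN$.
   Context: $\mathbb{Z}^+$ denotes the set of nonnegative integers. *)

theory Defs
  imports Complex_Main
begin

definition Rhat :: "nat \<Rightarrow> nat \<Rightarrow> nat \<Rightarrow> nat" where
  "Rhat N n r = min N (nat \<lfloor>real (N + 1) * (real r / real n)\<rfloor>)"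

end

theory Submission
  imports Defs
begin

text \<open>Since \<open>\<lfloor>(N+1) r / n\<rfloor> = ((N+1) r) div n\<close>, every bound on \<open>Rhat N n r\<close> is a bound on a
  natural-number quotient and reduces to a cross-multiplied inequality: \<open>r n \<le> (N+1) r\<close> and
  \<open>R n \<le> r N \<le> (N+1) r\<close> give the lower bounds, \<open>(N + 1 - n)(n - r) > 0\<close> for \<open>r < n\<close> gives the
  upper bound \<open>r + N - n\<close>, and \<open>r N \<le> R n\<close> with \<open>(N + 1) R < N (R + 1)\<close> for \<open>R < N\<close> gives the
  upper bound \<open>R\<close>.\<close>

lemma Rhat_eq_min_div:
  assumes "n > 0"
  shows "Rhat N n r = min N ((N + 1) * r div n)"
proof -
  have "real (N + 1) * (real r / real n) = real ((N + 1) * r) / real n"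
    by (simp only: of_nat_mult times_divide_eq_right)
  then show ?thesis
    unfolding Rhat_def by (simp only: floor_divide_of_nat_eq nat_int)
qed

lemma le_Rhat_iff:
  assumes "n > 0" and "k \<le> N"
  shows "k \<le> Rhat N n r \<longleftrightarrow> k * n \<le> (N + 1) * r"
  using assms by (simp add: Rhat_eq_min_div less_eq_div_iff_mult_less_eq)

lemma Rhat_le:
  assumes "n > 0" and "N \<le> k \<or> (N + 1) * r < (k + 1) * n"
  shows "Rhat N n r \<le> k"
proof -
  have "N \<le> k \<or> (N + 1) * r div n < k + 1"
    using assms by (simp add: div_less_iff_less_mult mult.commute)
  then show ?thesis
    using assms(1) by (auto simp: Rhat_eq_min_div)
qed

lemma le_Rhat_self:
  assumes "n > 0" and "n \<le> N + 1" and "r \<le> N"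
  shows "r \<le> Rhat N n r"
proof -
  have "r * n \<le> r * (N + 1)"
    using assms(2) by (rule mult_le_mono2)
  then show ?thesis
    using assms by (simp add: le_Rhat_iff mult.commute)
qed

lemma Rhat_le_add_diff:
  assumes "n > 0" and "n \<le> N" and "r \<le> n"
  shows "Rhat N n r \<le> r + N - n"
proof (rule Rhat_le)
  show "N \<le> r + N - n \<or> (N + 1) * r < (r + N - n + 1) * n"
  proof (cases "r = n")
    case False
    obtain s where N: "N = n + s"
      using assms(2) le_Suc_ex by blast
    have "(s + 1) * r < (s + 1) * n"
      using False assms(3) by (intro mult_strict_left_mono) auto
    then have "(N + 1) * r < (r + s + 1) * n"
      unfolding N by (simp add: algebra_simps)
    then show ?thesis
      unfolding N by (simp add: add.commute add.left_commute)
  qed simp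
qed (use assms in simp)

lemma Rhat_le_of_ratio_le:
  assumes "n > 0" and "R \<le> N" and "r * N \<le> R * n"
  shows "Rhat N n r \<le> R"
proof (rule Rhat_le)
  show "N \<le> R \<or> (N + 1) * r < (R + 1) * n"
  proof (cases "R = N")
    case False
    have "N * ((N + 1) * r) \<le> (N + 1) * (R * n)"
      using assms(3) by (metis mult.assoc mult.commute mult_le_mono2)
    also have "\<dots> < N * ((R + 1) * n)"
      using False assms by (simp add: algebra_simps)
    finally show ?thesis
      by simp
  qed simp
qed (use assms in simp)

lemma le_Rhat_of_ratio_le:
  assumes "n > 0" and "R \<le> N" and "R * n \<le> r * N"
  shows "R \<le> Rhat N n r"
  using assms by (simp add: le_Rhat_iff algebra_simps)

lemma ratio_le_iff_cross_mult:
  fixes a b c d :: nat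
  assumes "b > 0" and "d > 0"
  shows "real a / real b \<le> real c / real d \<longleftrightarrow> a * d \<le> c * b"
proof -
  have "real a / real b \<le> real c / real d \<longleftrightarrow> real a * real d \<le> real c * real b"
    using assms by (simp add: divide_simps)
  also have "\<dots> \<longleftrightarrow> a * d \<le> c * b"
    by (metis of_nat_le_iff of_nat_mult)
  finally show ?thesis .
qed

theorem lemma7:
  fixes N R n r :: nat
  assumes "N \<ge> 1" and "R \<le> N" and "1 \<le> n" and "n \<le> N" and "r \<le> n"
    and "int R + int n - int N \<le> int r" and "r \<le> R"
  shows "(real r / real n \<le> real R / real N \<longrightarrow> Rhat N n r \<in> {\<theta>::nat. r \<le> \<theta> \<and> \<theta> \<le> R})
    \<and> (real r / real n \<ge> real R / real N \<longrightarrow> Rhat N n r \<in> {\<theta>::nat. R \<le> \<theta> \<and> int \<theta> \<le> int r + int N - int n})"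
proof -
  have n_pos: "n > 0" and N_pos: "N > 0"
    using assms by auto
  show ?thesis
  proof (intro conjI impI)
    assume "real r / real n \<le> real R / real N"
    then have "r * N \<le> R * n"
      using n_pos N_pos by (simp add: ratio_le_iff_cross_mult)
    then show "Rhat N n r \<in> {\<theta>. r \<le> \<theta> \<and> \<theta> \<le> R}"
      using assms n_pos by (simp add: le_Rhat_self Rhat_le_of_ratio_le)
  next
    assume "real R / real N \<le> real r / real n"
    then have "R \<le> Rhat N n r"
      using assms n_pos N_pos by (simp add: ratio_le_iff_cross_mult le_Rhat_of_ratio_le)
    moreover have "Rhat N n r \<le> r + N - n"
      using assms n_pos by (simp add: Rhat_le_add_diff)
    ultimately show "Rhat N n r \<in> {\<theta>. R \<le> \<theta> \<and> int \<theta> \<le> int r + int N - int n}"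
      using assms by auto
  qed
qed

end
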